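(* Let $(X,d,\ll,\le,\tau)$ be a Lorentzian length space. Then for every $x\in X$, $\overline{I^+(x)}=\{y\in X: I^+(y)\subset I^+(x)\}$ and $\overline{I^-(x)}=\{y\in X: I^-(y)\subset I^-(x)\}$, where closures are taken in the topology of $d$.
   Context: A causal space $(X,\ll,\le)$ is a set $X$ with two transitive relations $\ll,\le$ such that $\le$ is reflexive and $x\ll y\Rightarrow x\le y$; write $p<q$ if $p\le q$ and $p\neq q$. Set $I^+(x)=\{y: x\ll y\}$, $I^-(x)=\{y: y\ll x\}$, $J^+(x)=\{y:x\le y\}$, $J^-(x)=\{y:y\le x\}$. A Lorentzian pre-length space $(X,d,\ll,\le,\tau)$ is a causal space together with a metric $d$ on $X$ and a function $\tau:X\times X\to[0,\infty]$ that is lower semicontinuous with respect to the topology of $d$, satisfies $\tau(x,z)\ge\tau(x,y)+\tau(y,z)$ whenever $x\le y\le z$, $\tau(x,y)=0$ if $x\not\le y$, and $\tau(x,y)>0\iff x\ll y$. All topological notions refer to the metric topology of $d$. A future directed causal (resp. timelike) curve is a non-constant Lipschitz map $\gamma:I\to X$ ($I\subset\mathbb R$ an interval) with $\gamma(s)\le\gamma(t)$ (resp. $\gamma(s)\ll\gamma(t)$) for all $s<t$. For a future directed causal $\gamma:[a,b]\to X$, $L_\tau(\gamma)=\inf\sum_{i=0}^{N-1}\tau(\gamma(t_i),\gamma(t_{i+1}))$ over all partitions $a=t_0<\dots<t_N=b$. The space is causally path connected if whenever $x\le y$ (resp. $x\ll y$) there is a future directed causal (resp. timelike) curve from $x$ to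 $y$. For open $U\subset X$, $p\le_U q$ means there is a future directed causal curve from $p$ to $q$ with image in $U$. A neighborhood $U$ is causally closed if whenever $p_n\le_U q_n$ with $p_n\to p\in U$, $q_n\to q\in U$, then $p\le_U q$; the space is locally causally closed if every point has a causally closed neighborhood. The space is localizable if every $x$ has a neighborhood $\Omega_x$ such that: (i) all causal curves contained in $\Omega_x$ have uniformly bounded $d$-length; (ii) there is a continuous $\omega_x:\Omega_x\times\Omega_x\to[0,\infty)$ such that $(\Omega_x,d|_{\Omega_x\times\Omega_x},\ll|_{\Omega_x},\le|_{\Omega_x},\omega_x)$ is a Lorentzian pre-length space, and $I^\pm(y)\cap\Omega_x\ne\emptyset$ for every $y\in\Omega_x$; (iii) for all $p,q\in\Omega_x$ with $p<q$ there is a future causal curve $\gamma_{p,q}$ from $p$ to $q$ with $L_\tau(\gamma_{p,q})\ge L_\tau(\gamma)$ for every future causal curve $\gamma\subset\Omega_x$ from $p$ to $q$, and $L_\tau(\gamma_{p,q})=\omega_x(p,q)$. A Lorentzian length space is a causally path connected, locally causally closed, localizable Lorentzian pre-length space with $\tau(x,y)=\sup\{L_\tau(\gamma):\gamma$ a future causal curve from $x$ to $y\}$. *)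

theory Defs
  imports "HOL-Analysis.Analysis"
begin

text \<open>The ambient set X is a type 'a of class metric_space; the metric d is dist.
  Relations are binary predicates: ll = timelike relation, le = causal relation.
  The time separation tau takes values in [0,\<infinity>] = ennreal.\<close>

definition causal_space_on :: "'a set \<Rightarrow> ('a \<Rightarrow> 'a \<Rightarrow> bool) \<Rightarrow> ('a \<Rightarrow> 'a \<Rightarrow> bool) \<Rightarrow> bool" where
  "causal_space_on S ll le \<longleftrightarrow>
     (\<forall>x\<in>S. \<forall>y\<in>S. \<forall>z\<in>S. ll x y \<longrightarrow> ll y z \<longrightarrow> ll x z) \<and>
     (\<forall>x\<in>S. \<forall>y\<in>S. \<forall>z\<in>S. le x y \<longrightarrow> le y z \<longrightarrow> le x z) \<and>
     (\<forall>x\<in>S. le x x) \<and>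
     (\<forall>x\<in>S. \<forall>y\<in>S. ll x y \<longrightarrow> le x y)"

definition lsc_on :: "'b::topological_space set \<Rightarrow> ('b \<Rightarrow> ennreal) \<Rightarrow> bool" where
  "lsc_on S f \<longleftrightarrow> (\<forall>p\<in>S. \<forall>c. c < f p \<longrightarrow> (\<forall>\<^sub>F q in at p within S. c < f q))"

definition lpls_on :: "'a::metric_space set \<Rightarrow> ('a \<Rightarrow> 'a \<Rightarrow> bool) \<Rightarrow> ('a \<Rightarrow> 'a \<Rightarrow> bool)
    \<Rightarrow> ('a \<Rightarrow> 'a \<Rightarrow> ennreal) \<Rightarrow> bool" where
  "lpls_on S ll le tau \<longleftrightarrow>
     causal_space_on S ll le \<and>
     lsc_on (S \<times> S) (\<lambda>(x, y). tau x y) \<and>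
     (\<forall>x\<in>S. \<forall>y\<in>S. \<forall>z\<in>S. le x y \<longrightarrow> le y z \<longrightarrow> tau x y + tau y z \<le> tau x z) \<and>
     (\<forall>x\<in>S. \<forall>y\<in>S. \<not> le x y \<longrightarrow> tau x y = 0) \<and>
     (\<forall>x\<in>S. \<forall>y\<in>S. 0 < tau x y \<longleftrightarrow> ll x y)"

definition fd_curve :: "('a::metric_space \<Rightarrow> 'a \<Rightarrow> bool) \<Rightarrow> real set \<Rightarrow> (real \<Rightarrow> 'a) \<Rightarrow> bool" where
  "fd_curve R I g \<longleftrightarrow>
     is_interval I \<and> (\<exists>C. C-lipschitz_on I g) \<and> (\<exists>s\<in>I. \<exists>t\<in>I. g s \<noteq> g t) \<and>
     (\<forall>s\<in>I. \<forall>t\<in>I. s < t \<longrightarrow> R (g s) (g t))"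

definition fd_curve_from_to :: "('a::metric_space \<Rightarrow> 'a \<Rightarrow> bool) \<Rightarrow> (real \<Rightarrow> 'a) \<Rightarrow> real \<Rightarrow> real
    \<Rightarrow> 'a \<Rightarrow> 'a \<Rightarrow> bool" where
  "fd_curve_from_to R g a b x y \<longleftrightarrow> a < b \<and> fd_curve R {a..b} g \<and> g a = x \<and> g b = y"

definition partitions :: "real \<Rightarrow> real \<Rightarrow> (nat \<times> (nat \<Rightarrow> real)) set" where
  "partitions a b = {(N, t). 0 < N \<and> t 0 = a \<and> t N = b \<and> (\<forall>i<N. t i < t (Suc i))}"

definition L_tau :: "('a \<Rightarrow> 'a \<Rightarrow> ennreal) \<Rightarrow> (real \<Rightarrow> 'a) \<Rightarrow> real \<Rightarrow> real \<Rightarrow> ennreal" where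
  "L_tau tau g a b = (INF (N, t) \<in> partitions a b. \<Sum>i<N. tau (g (t i)) (g (t (Suc i))))"

definition d_length :: "real set \<Rightarrow> (real \<Rightarrow> 'a::metric_space) \<Rightarrow> ennreal" where
  "d_length I g = (SUP (N, t) \<in> {(N, t). (\<forall>i\<le>N. t i \<in> I) \<and> (\<forall>i<N. t i \<le> t (Suc i))}.
      \<Sum>i<N. ennreal (dist (g (t i)) (g (t (Suc i)))))"

definition causally_path_connected :: "('a::metric_space \<Rightarrow> 'a \<Rightarrow> bool) \<Rightarrow> ('a \<Rightarrow> 'a \<Rightarrow> bool) \<Rightarrow> bool" where
  "causally_path_connected ll le \<longleftrightarrow>
     (\<forall>x y. le x y \<and> x \<noteq> y \<longrightarrow> (\<exists>g a b. fd_curve_from_to le g a b x y)) \<and>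
     (\<forall>x y. ll x y \<longrightarrow> (\<exists>g a b. fd_curve_from_to ll g a b x y))"

definition causal_in :: "('a::metric_space \<Rightarrow> 'a \<Rightarrow> bool) \<Rightarrow> 'a set \<Rightarrow> 'a \<Rightarrow> 'a \<Rightarrow> bool" where
  "causal_in le U p q \<longleftrightarrow> p = q \<or> (\<exists>g a b. fd_curve_from_to le g a b p q \<and> g ` {a..b} \<subseteq> U)"

definition causally_closed :: "('a::metric_space \<Rightarrow> 'a \<Rightarrow> bool) \<Rightarrow> 'a set \<Rightarrow> bool" where
  "causally_closed le U \<longleftrightarrow>
     (\<forall>p q P Q. (\<forall>n. causal_in le U (P n) (Q n)) \<and> P \<longlonglongrightarrow> p \<and> Q \<longlonglongrightarrow> q \<and> p \<in> U \<and> q \<in> U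
        \<longrightarrow> causal_in le U p q)"

definition locally_causally_closed :: "('a::metric_space \<Rightarrow> 'a \<Rightarrow> bool) \<Rightarrow> bool" where
  "locally_causally_closed le \<longleftrightarrow> (\<forall>x. \<exists>U. open U \<and> x \<in> U \<and> causally_closed le U)"

definition localizable :: "('a::metric_space \<Rightarrow> 'a \<Rightarrow> bool) \<Rightarrow> ('a \<Rightarrow> 'a \<Rightarrow> bool)
    \<Rightarrow> ('a \<Rightarrow> 'a \<Rightarrow> ennreal) \<Rightarrow> bool" where
  "localizable ll le tau \<longleftrightarrow> (\<forall>x. \<exists>\<Omega> (\<omega> :: 'a \<Rightarrow> 'a \<Rightarrow> real).
     (\<exists>V. open V \<and> x \<in> V \<and> V \<subseteq> \<Omega>) \<and>
     \<comment> \<open>(i)\<close>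
     (\<exists>C::real. \<forall>I g. fd_curve le I g \<and> g ` I \<subseteq> \<Omega> \<longrightarrow> d_length I g \<le> ennreal C) \<and>
     \<comment> \<open>(ii)\<close>
     continuous_on (\<Omega> \<times> \<Omega>) (\<lambda>(p, q). \<omega> p q) \<and> (\<forall>p\<in>\<Omega>. \<forall>q\<in>\<Omega>. 0 \<le> \<omega> p q) \<and>
     lpls_on \<Omega> ll le (\<lambda>p q. ennreal (\<omega> p q)) \<and>
     (\<forall>y\<in>\<Omega>. (\<exists>z\<in>\<Omega>. ll y z) \<and> (\<exists>z\<in>\<Omega>. ll z y)) \<and>
     \<comment> \<open>(iii)\<close>
     (\<forall>p\<in>\<Omega>. \<forall>q\<in>\<Omega>. le p q \<and> p \<noteq> q \<longrightarrow>
        (\<exists>g a b. fd_curve_from_to le g a b p q \<and>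
           (\<forall>h c e. fd_curve_from_to le h c e p q \<and> h ` {c..e} \<subseteq> \<Omega> \<longrightarrow> L_tau tau h c e \<le> L_tau tau g a b) \<and>
           L_tau tau g a b = ennreal (\<omega> p q))))"

definition lorentzian_length_space :: "('a::metric_space \<Rightarrow> 'a \<Rightarrow> bool) \<Rightarrow> ('a \<Rightarrow> 'a \<Rightarrow> bool)
    \<Rightarrow> ('a \<Rightarrow> 'a \<Rightarrow> ennreal) \<Rightarrow> bool" where
  "lorentzian_length_space ll le tau \<longleftrightarrow>
     lpls_on UNIV ll le tau \<and> causally_path_connected ll le \<and> locally_causally_closed le \<and>
     localizable ll le tau \<and>
     (\<forall>x y. tau x y = (SUP (g, a, b) \<in> {(g, a, b). fd_curve_from_to le g a b x y}. L_tau tau g a b))"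

end

theory Submission
  imports Defs
begin

text \<open>The timelike relation is open because \<open>tau\<close> is lower semicontinuous and \<open>ll\<close> is \<open>0 < tau\<close>.
  Hence if \<open>y\<close> is a limit of points of \<open>I\<^sup>+(x)\<close> and \<open>ll y z\<close>, some \<open>w \<in> I\<^sup>+(x)\<close> close to \<open>y\<close>
  still satisfies \<open>ll w z\<close>, so \<open>z \<in> I\<^sup>+(x)\<close>. Conversely, every point starts a timelike curve
  and is therefore a limit of its own chronological future; so \<open>I\<^sup>+(y) \<subseteq> I\<^sup>+(x)\<close> puts \<open>y\<close>
  in the closure of \<open>I\<^sup>+(x)\<close>. The past case is the same argument for the converse relation.\<close>

lemma closure_chronological_future_eq:
  fixes R :: "'a::topological_space \<Rightarrow> 'a \<Rightarrow> bool"
  assumes trans: "\<And>a b c. R a b \<Longrightarrow> R b c \<Longrightarrow> R a c"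
    and open_past: "\<And>z. open {w. R w z}"
    and in_closure_future: "\<And>y. y \<in> closure {w. R y w}"
  shows "closure {y. R x y} = {y. {z. R y z} \<subseteq> {z. R x z}}"
proof (intro set_eqI iffI)
  fix y assume y: "y \<in> closure {y. R x y}"
  show "y \<in> {y. {z. R y z} \<subseteq> {z. R x z}}"
  proof (safe)
    fix z assume "R y z"
    then have "{w. R w z} \<inter> closure {y. R x y} \<noteq> {}" using y by blast
    then have "{w. R w z} \<inter> {y. R x y} \<noteq> {}"
      using open_Int_closure_eq_empty[OF open_past] by blast
    then show "R x z" using trans by blast
  qed
next
  fix y assume "y \<in> {y. {z. R y z} \<subseteq> {z. R x z}}"
  then have "closure {w. R y w} \<subseteq> closure {w. R x w}" by (intro closure_mono) auto
  then show "y \<in> closure {y. R x y}" using in_closure_future by blast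
qed

lemma fd_curve_from_to_in_closure:
  assumes "fd_curve_from_to R g a b p q"
  shows "p \<in> closure {w. R p w}" and "q \<in> closure {w. R w q}"
proof -
  have ab: "a < b" and ends: "g a = p" "g b = q" and curve: "fd_curve R {a..b} g"
    using assms unfolding fd_curve_from_to_def by auto
  have cont: "continuous_on {a..b} g"
    using curve lipschitz_on_continuous_on unfolding fd_curve_def by blast
  have related: "\<And>s t. s \<in> {a..b} \<Longrightarrow> t \<in> {a..b} \<Longrightarrow> s < t \<Longrightarrow> R (g s) (g t)"
    using curve unfolding fd_curve_def by blast
  have "g ` {a<..b} \<subseteq> {w. R p w}"
    using related[of a] ends by auto
  then have "g ` closure {a<..b} \<subseteq> closure {w. R p w}"
    using cont ab closure_subset[of "{w. R p w}"] by (intro image_closure_subset) auto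
  then show "p \<in> closure {w. R p w}" using ab ends by auto
  have "g ` {a..<b} \<subseteq> {w. R w q}"
    using related[of _ b] ends by auto
  then have "g ` closure {a..<b} \<subseteq> closure {w. R w q}"
    using cont ab closure_subset[of "{w. R w q}"] by (intro image_closure_subset) auto
  then show "q \<in> closure {w. R w q}" using ab ends by auto
qed

lemma lpls_on_UNIV_open_timelike:
  assumes "lpls_on UNIV ll le tau"
  shows "open {(p, q). ll p q}"
proof (rule open_subopen[THEN iffD2], safe)
  fix p q assume "ll p q"
  have "lsc_on (UNIV \<times> UNIV) (\<lambda>(x, y). tau x y)"
    and pos: "\<And>x y. 0 < tau x y \<longleftrightarrow> ll x y"
    using assms by (simp_all add: lpls_on_def)
  then have "\<forall>\<^sub>F r in at (p, q). 0 < (\<lambda>(x, y). tau x y) r"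
    using \<open>ll p q\<close> unfolding lsc_on_def by auto
  then obtain S where "open S" "(p, q) \<in> S" "\<forall>r\<in>S. r \<noteq> (p, q) \<longrightarrow> 0 < (\<lambda>(x, y). tau x y) r"
    unfolding eventually_at_topological by auto
  then show "\<exists>T. open T \<and> (p, q) \<in> T \<and> T \<subseteq> {(p, q). ll p q}"
    using \<open>ll p q\<close> pos by (intro exI[of _ S]) auto
qed

lemma lorentzian_length_space_open_timelike:
  assumes "lorentzian_length_space ll le tau"
  shows "open {w. ll w z}" and "open {w. ll z w}"
proof -
  have timelike: "open {(p, q). ll p q}"
    using assms lpls_on_UNIV_open_timelike unfolding lorentzian_length_space_def by blast
  have "open ((\<lambda>w. (w, z)) -` {(p, q). ll p q})"
    using timelike by (rule continuous_open_vimage) (intro continuous_intros)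
  moreover have "open (Pair z -` {(p, q). ll p q})"
    using timelike by (rule continuous_open_vimage) (intro continuous_intros)
  ultimately show "open {w. ll w z}" and "open {w. ll z w}"
    by (simp_all add: vimage_def)
qed

lemma lorentzian_length_space_timelike_trans:
  assumes "lorentzian_length_space ll le tau" "ll a b" "ll b c"
  shows "ll a c"
proof -
  have "causal_space_on UNIV ll le"
    using assms(1) by (simp add: lorentzian_length_space_def lpls_on_def)
  then show ?thesis
    using assms(2,3) unfolding causal_space_on_def by blast
qed

lemma lorentzian_length_space_in_closure_timelike:
  assumes "lorentzian_length_space ll le tau"
  shows "y \<in> closure {w. ll y w}" and "y \<in> closure {w. ll w y}"
proof -
  have loc: "localizable ll le tau" and cpc: "causally_path_connected ll le"
    using assms unfolding lorentzian_length_space_def by auto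
  have timelike_curve: "\<exists>g a b. fd_curve_from_to ll g a b p q" if "ll p q" for p q
    using cpc that unfolding causally_path_connected_def by blast
  obtain \<Omega> :: "'a set" where
    "\<exists>V. open V \<and> y \<in> V \<and> V \<subseteq> \<Omega>" and "\<forall>y\<in>\<Omega>. (\<exists>z\<in>\<Omega>. ll y z) \<and> (\<exists>z\<in>\<Omega>. ll z y)"
    using loc[unfolded localizable_def, rule_format, of y] by (elim exE conjE) blast
  then obtain z z' where "ll y z" "ll z' y" by blast
  then obtain g a b g' a' b' where
    "fd_curve_from_to ll g a b y z" "fd_curve_from_to ll g' a' b' z' y"
    using timelike_curve by meson
  then show "y \<in> closure {w. ll y w}" and "y \<in> closure {w. ll w y}"
    by (simp_all add: fd_curve_from_to_in_closure)
qed

theorem proposition2p19: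
  fixes ll le :: "'a::metric_space \<Rightarrow> 'a \<Rightarrow> bool" and tau :: "'a \<Rightarrow> 'a \<Rightarrow> ennreal" and x :: 'a
  assumes "lorentzian_length_space ll le tau"
  shows "closure {y. ll x y} = {y. {z. ll y z} \<subseteq> {z. ll x z}} \<and>
         closure {y. ll y x} = {y. {z. ll z y} \<subseteq> {z. ll z x}}"
proof
  note trans = lorentzian_length_space_timelike_trans[OF assms]
  note opens = lorentzian_length_space_open_timelike[OF assms]
  note approx = lorentzian_length_space_in_closure_timelike[OF assms]
  show "closure {y. ll x y} = {y. {z. ll y z} \<subseteq> {z. ll x z}}"
    by (rule closure_chronological_future_eq) (use trans opens(1) approx(1) in auto)
  show "closure {y. ll y x} = {y. {z. ll z y} \<subseteq> {z. ll z x}}"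
    by (rule closure_chronological_future_eq[where R = "\<lambda>a b. ll b a"])
      (use trans opens(2) approx(2) in auto)
qed

end
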